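(* Let $\mu,\mu',\nu$ be subdistributions over closed nondeterministic expressions and $\alpha$ an action such that $\nu\simeq\mu$ (lifted weak congruence) and $\mu\xrightarrow{\alpha}\mu'$ (combined transition). Then there exists $\nu'$ such that $\nu\xRightarrow{\alpha}\nu'$ and $\nu'\approx\mu'$.
   Context: Fix a set $\mathsf{Act}$ of actions containing $\tau$. Nondeterministic expressions: $E ::= 0 \mid X \mid \alpha.P \mid \mathrm{rec}\,X.E \mid E + E$; probabilistic expressions: $P ::= \partial(E) \mid P \oplus_p P$ ($0<p<1$); closed means no free variables. Subdistributions $\mu$ over $S$: $\mu:S\to\mathbb R_{\ge0}$, $|\mu|\le1$; $\delta_s$ Dirac. Semantics: least relations with $\partial(E)\mapsto\delta_E$; $P\oplus_pQ\mapsto p\mu+(1-p)\nu$ if $P\mapsto\mu,Q\mapsto\nu$; $\alpha.P\xrightarrow{\alpha}\mu$ if $P\mapsto\mu$; $\mathrm{rec}\,X.E\xrightarrow{\alpha}\mu$ if $E[\mathrm{rec}\,X.E/X]\xrightarrow{\alpha}\mu$; $E+F\xrightarrow{\alpha}\mu$ and $F+E\xrightarrow{\alpha}\mu$ if $E\xrightarrow{\alpha}\mu$. Combined transitions on subdistributions: least relation with $\delta_E\xrightarrow{\alpha}\mu$ if $E\xrightarrow{\alpha}\mu$, closed under $\sum p_i\nu_i\xrightarrow{\alpha}\sum p_i\mu_i$ ($\nu_i\xrightarrow{\alpha}\mu_i$, $p_i\ge0$, $\sum p_i\le1$). A derivation is $(\mu_i^{\to},\mu_i^{\times})_{i\in\mathbb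 N}$ with $\mu_i^{\to}\xrightarrow{\tau}\mu^{\to}_{i+1}+\mu^{\times}_{i+1}$; $\mu\Rightarrow\nu$ iff a derivation has $\mu=\mu_0^{\to}+\mu_0^{\times}$, $\nu=\sum_i\mu_i^\times$. $\mu\xRightarrow{\alpha}\nu$ iff $\mu\Rightarrow\xrightarrow{\alpha}\Rightarrow\nu$; $\xRightarrow{\hat\alpha}$ is $\Rightarrow$ for $\alpha=\tau$ and $\xRightarrow{\alpha}$ otherwise. Lifting of a relation $\mathcal R$ on expressions to subdistributions: least relation with $\delta_E\mathcal R\delta_F$ for $E\mathcal RF$, closed under $\sum p_i\mu_i\mathcal R\sum p_i\nu_i$ ($\mu_i\mathcal R\nu_i$, $p_i\ge0$, $\sum p_i\le1$). Weak bisimulation: relation $\mathcal R$ on closed expressions such that if $E\mathcal RF$ and $E\xrightarrow{\alpha}\mu$ then $F\xRightarrow{\hat\alpha}\nu$ with $\mu\mathcal R\nu$, and symmetrically; $\approx$ is weak bisimilarity. Closed $E,F$ are weakly congruent, $E\simeq F$, iff $E\xrightarrow{\alpha}\mu$ implies $F\xRightarrow{\alpha}\nu$ with $\mu\approx\nu$, and $F\xrightarrow{\alpha}\nu$ implies $E\xRightarrow{\alpha}\mu$ with $\mu\approx\nu$. *)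

theory Defs
  imports "HOL-Analysis.Infinite_Sum"
begin

datatype 'a act = Tau | Vis 'a

typedef prob = "{p::real. 0 < p \<and> p < 1}"
  by (rule exI[of _ "1/2"]) simp

type_synonym var = nat

datatype 'a nexp =
    Nil
  | Var var
  | Pref "'a act" "'a pexp"
  | Rec var "'a nexp"
  | Sum "'a nexp" "'a nexp"
and 'a pexp =
    Dirac "'a nexp"
  | PCh "'a pexp" prob "'a pexp"

fun fv_n :: "'a nexp \<Rightarrow> var set" and fv_p :: "'a pexp \<Rightarrow> var set" where
  "fv_n Nil = {}"
| "fv_n (Var X) = {X}"
| "fv_n (Pref a P) = fv_p P"
| "fv_n (Rec X E) = fv_n E - {X}"
| "fv_n (Sum E F) = fv_n E \<union> fv_n F"
| "fv_p (Dirac E) = fv_n E"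
| "fv_p (PCh P p Q) = fv_p P \<union> fv_p Q"

definition closed :: "'a nexp \<Rightarrow> bool" where
  "closed E \<longleftrightarrow> fv_n E = {}"

text \<open>Substitution E[T/X]; it is only ever used with a closed T (rec X.E of a
closed expression), so no variable capture can occur.\<close>
fun subst_n :: "'a nexp \<Rightarrow> var \<Rightarrow> 'a nexp \<Rightarrow> 'a nexp"
and subst_p :: "'a pexp \<Rightarrow> var \<Rightarrow> 'a nexp \<Rightarrow> 'a pexp" where
  "subst_n Nil X T = Nil"
| "subst_n (Var Y) X T = (if Y = X then T else Var Y)"
| "subst_n (Pref a P) X T = Pref a (subst_p P X T)"
| "subst_n (Rec Y E) X T = (if Y = X then Rec Y E else Rec Y (subst_n E X T))"
| "subst_n (Sum E F) X T = Sum (subst_n E X T) (subst_n F X T)"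
| "subst_p (Dirac E) X T = Dirac (subst_n E X T)"
| "subst_p (PCh P p Q) X T = PCh (subst_p P X T) p (subst_p Q X T)"

type_synonym 'a dist = "'a nexp \<Rightarrow> real"

definition subdist :: "'a dist \<Rightarrow> bool" where
  "subdist \<mu> \<longleftrightarrow> (\<forall>s. 0 \<le> \<mu> s) \<and> (\<forall>s. \<not> closed s \<longrightarrow> \<mu> s = 0)
      \<and> \<mu> summable_on UNIV \<and> infsum \<mu> UNIV \<le> 1"

definition dirac :: "'a nexp \<Rightarrow> 'a dist" where
  "dirac E = (\<lambda>s. if s = E then 1 else 0)"

definition comb :: "(nat \<Rightarrow> real) \<Rightarrow> (nat \<Rightarrow> 'a dist) \<Rightarrow> 'a dist" where
  "comb p \<mu> = (\<lambda>s. \<Sum>i. p i * \<mu> i s)"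

definition weights :: "(nat \<Rightarrow> real) \<Rightarrow> bool" where
  "weights p \<longleftrightarrow> (\<forall>i. 0 \<le> p i) \<and> summable p \<and> suminf p \<le> 1"

inductive pstep :: "'a pexp \<Rightarrow> 'a dist \<Rightarrow> bool" where
  "pstep (Dirac E) (dirac E)"
| "pstep P \<mu> \<Longrightarrow> pstep Q \<nu> \<Longrightarrow>
     pstep (PCh P p Q) (\<lambda>s. Rep_prob p * \<mu> s + (1 - Rep_prob p) * \<nu> s)"

inductive ntrans :: "'a nexp \<Rightarrow> 'a act \<Rightarrow> 'a dist \<Rightarrow> bool" where
  "pstep P \<mu> \<Longrightarrow> ntrans (Pref a P) a \<mu>"
| "ntrans (subst_n E X (Rec X E)) a \<mu> \<Longrightarrow> ntrans (Rec X E) a \<mu>"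
| "ntrans E a \<mu> \<Longrightarrow> ntrans (Sum E F) a \<mu>"
| "ntrans E a \<mu> \<Longrightarrow> ntrans (Sum F E) a \<mu>"

inductive ctrans :: "'a dist \<Rightarrow> 'a act \<Rightarrow> 'a dist \<Rightarrow> bool" where
  base: "closed E \<Longrightarrow> ntrans E a \<mu> \<Longrightarrow> ctrans (dirac E) a \<mu>"
| comb: "weights p \<Longrightarrow> \<forall>i. ctrans (\<nu> i) a (\<mu> i) \<Longrightarrow> ctrans (comb p \<nu>) a (comb p \<mu>)"

definition derivation :: "(nat \<Rightarrow> 'a dist) \<Rightarrow> (nat \<Rightarrow> 'a dist) \<Rightarrow> bool" where
  "derivation mto mx \<longleftrightarrow> (\<forall>i. subdist (mto i) \<and> subdist (mx i)) \<and>
     (\<forall>i. ctrans (mto i) Tau (\<lambda>s. mto (Suc i) s + mx (Suc i) s))"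

definition weak :: "'a dist \<Rightarrow> 'a dist \<Rightarrow> bool" where
  "weak \<mu> \<nu> \<longleftrightarrow> (\<exists>mto mx. derivation mto mx \<and> \<mu> = (\<lambda>s. mto 0 s + mx 0 s)
       \<and> \<nu> = (\<lambda>s. \<Sum>i. mx i s))"

definition wtrans :: "'a dist \<Rightarrow> 'a act \<Rightarrow> 'a dist \<Rightarrow> bool" where
  "wtrans \<mu> a \<nu> \<longleftrightarrow> (\<exists>\<mu>1 \<mu>2. weak \<mu> \<mu>1 \<and> ctrans \<mu>1 a \<mu>2 \<and> weak \<mu>2 \<nu>)"

definition wtrans_hat :: "'a dist \<Rightarrow> 'a act \<Rightarrow> 'a dist \<Rightarrow> bool" where
  "wtrans_hat \<mu> a \<nu> \<longleftrightarrow> (if a = Tau then weak \<mu> \<nu> else wtrans \<mu> a \<nu>)"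

inductive lift :: "('a nexp \<Rightarrow> 'a nexp \<Rightarrow> bool) \<Rightarrow> 'a dist \<Rightarrow> 'a dist \<Rightarrow> bool"
  for R where
  base: "R E F \<Longrightarrow> lift R (dirac E) (dirac F)"
| comb: "weights p \<Longrightarrow> \<forall>i. lift R (\<mu> i) (\<nu> i) \<Longrightarrow> lift R (comb p \<mu>) (comb p \<nu>)"

definition weak_bisimulation :: "('a nexp \<Rightarrow> 'a nexp \<Rightarrow> bool) \<Rightarrow> bool" where
  "weak_bisimulation R \<longleftrightarrow>
     (\<forall>E F. R E F \<longrightarrow> closed E \<and> closed F) \<and>
     (\<forall>E F a \<mu>. R E F \<and> ntrans E a \<mu> \<longrightarrow> (\<exists>\<nu>. wtrans_hat (dirac F) a \<nu> \<and> lift R \<mu> \<nu>)) \<and>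
     (\<forall>E F a \<nu>. R E F \<and> ntrans F a \<nu> \<longrightarrow> (\<exists>\<mu>. wtrans_hat (dirac E) a \<mu> \<and> lift R \<mu> \<nu>))"

definition wbisim :: "'a nexp \<Rightarrow> 'a nexp \<Rightarrow> bool" where
  "wbisim E F \<longleftrightarrow> (\<exists>R. weak_bisimulation R \<and> R E F)"

definition wcong :: "'a nexp \<Rightarrow> 'a nexp \<Rightarrow> bool" where
  "wcong E F \<longleftrightarrow> closed E \<and> closed F \<and>
     (\<forall>a \<mu>. ntrans E a \<mu> \<longrightarrow> (\<exists>\<nu>. wtrans (dirac F) a \<nu> \<and> lift wbisim \<mu> \<nu>)) \<and>
     (\<forall>a \<nu>. ntrans F a \<nu> \<longrightarrow> (\<exists>\<mu>. wtrans (dirac E) a \<mu> \<and> lift wbisim \<mu> \<nu>))"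

end

(* Induction on the lifting of weak congruence. Every combined transition has a normal form
   sum_j q_j delta(e_j) --a--> sum_j q_j t_j with e_j --a--> t_j. For a Dirac distribution delta(E)
   all e_j of positive weight equal E, so each t_j is matched, by weak congruence, by a weak
   transition of the partner of E. A transition of a combination sum_i p_i mu_i splits into
   transitions of the components: mu_i = sum_j r_ij delta(e_j) with r_ij = q_j mu_i(e_j) / M(e_j),
   where M = sum_i p_i mu_i, and then sum_i p_i r_ij = q_j. Since weak transitions and liftings
   are closed under countable combinations, the matching transitions reassemble. *)

theory Submission
  imports Defs "HOL-Library.Nat_Bijection" "HOL-Analysis.Elementary_Metric_Spaces"
    (* the latter makes real a t3_space, as has_sum_SigmaI requires *)
begin

section \<open>Nonnegative double series\<close>

lemma has_sum_double_series_nonneg: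
  fixes a :: "nat \<Rightarrow> nat \<Rightarrow> real"
  assumes nonneg: "\<And>i j. 0 \<le> a i j" and rows: "\<And>i. summable (a i)"
    and sums: "summable (\<lambda>i. suminf (a i))"
  shows "((\<lambda>(i, j). a i j) has_sum (\<Sum>i. \<Sum>j. a i j)) UNIV"
proof -
  have row: "(a i has_sum suminf (a i)) UNIV" for i
    using rows nonneg by (intro sums_nonneg_imp_has_sum summable_sums)
  have total: "((\<lambda>i. suminf (a i)) has_sum (\<Sum>i. \<Sum>j. a i j)) UNIV"
    using sums rows nonneg
    by (intro sums_nonneg_imp_has_sum summable_sums) (auto intro: suminf_nonneg)
  have "(\<lambda>(i, j). a i j) summable_on Sigma UNIV (\<lambda>_. UNIV)"
    using row sums nonneg by (intro summable_on_SigmaI summable_nonneg_imp_summable_on)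
      (auto intro: suminf_nonneg rows)
  then have "((\<lambda>(i, j). a i j) has_sum (\<Sum>i. \<Sum>j. a i j)) (Sigma UNIV (\<lambda>_. UNIV))"
    by (intro has_sum_SigmaI[where f = "\<lambda>(i, j). a i j", OF _ total]) (use row in simp_all)
  then show ?thesis by simp
qed

lemma sums_swap_nonneg:
  fixes a :: "nat \<Rightarrow> nat \<Rightarrow> real"
  assumes "\<And>i j. 0 \<le> a i j" "\<And>i. summable (a i)" "summable (\<lambda>i. suminf (a i))"
  shows "(\<lambda>j. \<Sum>i. a i j) sums (\<Sum>i. \<Sum>j. a i j)"
proof -
  have swapped: "((\<lambda>(j, i). a i j) has_sum (\<Sum>i. \<Sum>j. a i j)) (UNIV \<times> UNIV)"
    using has_sum_double_series_nonneg[OF assms]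
      has_sum_swap[where f = "\<lambda>(i, j). a i j" and A = UNIV and B = UNIV]
    by simp
  have column: "((\<lambda>i. a i j) has_sum (\<Sum>i. a i j)) UNIV" for j
  proof -
    have "(\<lambda>i. a i j) summable_on UNIV"
      using summable_on_SigmaD1[of "\<lambda>j i. a i j" UNIV "\<lambda>_. UNIV" j] swapped
      by (auto dest: has_sum_imp_summable)
    then show ?thesis
      using has_sum_imp_sums sums_unique by (metis has_sum_infsum)
  qed
  show ?thesis
    by (rule has_sum_imp_sums, rule has_sum_Sigma'[OF swapped]) (use column in auto)
qed

lemma sums_prod_decode_nonneg:
  fixes a :: "nat \<Rightarrow> nat \<Rightarrow> real"
  assumes "\<And>i j. 0 \<le> a i j" "\<And>i. summable (a i)" "summable (\<lambda>i. suminf (a i))"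
  shows "(\<lambda>n. case_prod a (prod_decode n)) sums (\<Sum>i. \<Sum>j. a i j)"
  using has_sum_double_series_nonneg[OF assms]
    has_sum_reindex_bij_betw[OF bij_prod_decode, of "\<lambda>(i, j). a i j"]
  by (auto intro: has_sum_imp_sums)

section \<open>Countable combinations\<close>

lemma weights_nonneg: "weights p \<Longrightarrow> 0 \<le> p i"
  and weights_summable: "weights p \<Longrightarrow> summable p"
  and weights_suminf_le_1: "weights p \<Longrightarrow> suminf p \<le> 1"
  by (auto simp: weights_def)

lemma weights_le_1: "weights p \<Longrightarrow> p i \<le> 1"
  using sum_le_suminf[of p "{i}"] by (auto simp: weights_def)

lemma weights_zero: "weights (\<lambda>_. 0)"
  by (simp add: weights_def)

lemma weights_unit: "weights (\<lambda>j. of_bool (j = 0))"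
proof -
  have "(\<lambda>j. of_bool (j = 0) :: real) sums 1"
    using sums_single[of 0 "\<lambda>_. 1 :: real"] by (simp add: of_bool_def)
  then show ?thesis by (auto simp: weights_def sums_iff)
qed

lemma comb_unit: "comb (\<lambda>j. of_bool (j = 0)) f = f 0"
proof
  fix s
  have "(\<lambda>j. of_bool (j = 0) * f j s) = (\<lambda>j. if j = 0 then f 0 s else 0)"
    by auto
  then have "(\<lambda>j. of_bool (j = 0) * f j s) sums f 0 s"
    using sums_single[of 0 "\<lambda>_. f 0 s"] by simp
  then show "comb (\<lambda>j. of_bool (j = 0)) f s = f 0 s" by (simp add: comb_def sums_iff)
qed

lemma comb_zero: "comb (\<lambda>_. 0) f = (\<lambda>_. 0)"
  by (simp add: comb_def)

lemma comb_cong: "(\<And>i. p i \<noteq> 0 \<Longrightarrow> f i = g i) \<Longrightarrow> comb p f = comb p g"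
  unfolding comb_def by (rule ext, rule arg_cong[where f = suminf]) (metis mult_zero_left)

lemma summable_weighted:
  fixes f :: "nat \<Rightarrow> real"
  assumes "weights p" "\<And>i. 0 \<le> f i" "\<And>i. f i \<le> C"
  shows "summable (\<lambda>i. p i * f i)"
proof (rule summable_comparison_test')
  show "summable (\<lambda>i. p i * C)"
    using weights_summable[OF assms(1)] by (rule summable_mult2)
  show "norm (p i * f i) \<le> p i * C" for i
    using assms weights_nonneg[OF assms(1), of i] by (simp add: abs_mult mult_left_mono)
qed

lemma comb_nonneg:
  assumes "weights p" "\<And>i. 0 \<le> f i s" "\<And>i. f i s \<le> C"
  shows "0 \<le> comb p f s"
  unfolding comb_def using assms weights_nonneg[OF assms(1)]
  by (intro suminf_nonneg summable_weighted[of _ _ C]) auto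

lemma comb_le:
  assumes p: "weights p" and "\<And>i. 0 \<le> f i s" "\<And>i. f i s \<le> C" "0 \<le> C"
  shows "comb p f s \<le> C"
proof -
  have "comb p f s \<le> (\<Sum>i. p i * C)"
    unfolding comb_def using assms weights_nonneg[OF p] weights_summable[OF p]
    by (intro suminf_le summable_weighted[OF p, of _ C] summable_mult2) (auto intro: mult_left_mono)
  also have "\<dots> = suminf p * C"
    using suminf_mult2[OF weights_summable[OF p]] by simp
  also have "\<dots> \<le> C"
    using weights_suminf_le_1[OF p] \<open>0 \<le> C\<close>
      suminf_nonneg[OF weights_summable[OF p] weights_nonneg[OF p]]
    by (simp add: mult_left_le_one_le)
  finally show ?thesis .
qed

lemma comb_ge_component:
  assumes p: "weights p" and "\<And>i. 0 \<le> f i s" "\<And>i. f i s \<le> 1"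
  shows "p i * f i s \<le> comb p f s"
  unfolding comb_def using assms weights_nonneg[OF p]
  by (intro sum_le_suminf[of _ "{i}", simplified] summable_weighted[of _ _ 1]) auto

lemma comb_add:
  assumes p: "weights p" and "\<And>i s. 0 \<le> f i s" "\<And>i s. f i s \<le> 1" "\<And>i s. 0 \<le> g i s" "\<And>i s. g i s \<le> 1"
  shows "comb p (\<lambda>i s. f i s + g i s) = (\<lambda>s. comb p f s + comb p g s)"
  unfolding comb_def
  using suminf_add[OF summable_weighted[OF p, of "\<lambda>i. f i _" 1] summable_weighted[OF p, of "\<lambda>i. g i _" 1]]
    assms
  by (simp add: distrib_left)

lemma comb_const:
  assumes "weights p"
  shows "comb p (\<lambda>_. f) = (\<lambda>s. suminf p * f s)"
  unfolding comb_def using suminf_mult2[OF weights_summable[OF assms]] by simp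

lemma suminf_weighted_swap:
  fixes f :: "nat \<Rightarrow> nat \<Rightarrow> real"
  assumes p: "weights p" and f: "\<And>i k. 0 \<le> f i k" "\<And>i. summable (f i)" "\<And>i. suminf (f i) \<le> C"
  shows "(\<Sum>i. p i * suminf (f i)) = (\<Sum>k. \<Sum>i. p i * f i k)"
proof -
  have row: "(\<lambda>k. p i * f i k) sums (p i * suminf (f i))" for i
    using f by (intro sums_mult summable_sums)
  then have row_sum: "(\<lambda>i. \<Sum>k. p i * f i k) = (\<lambda>i. p i * suminf (f i))"
    by (simp add: sums_iff)
  have "(\<lambda>k. \<Sum>i. p i * f i k) sums (\<Sum>i. \<Sum>k. p i * f i k)"
  proof (rule sums_swap_nonneg)
    show "summable (\<lambda>i. \<Sum>k. p i * f i k)"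
      unfolding row_sum using f by (intro summable_weighted[OF p, of _ C] suminf_nonneg)
    show "summable (\<lambda>k. p i * f i k)" for i
      using row by (rule sums_summable)
  qed (use f weights_nonneg[OF p] in simp)
  then show ?thesis
    by (simp add: row_sum sums_iff)
qed

lemma comb_comb_swap:
  assumes p: "weights p" and r: "\<And>i. weights (r i)" and t: "\<And>j s. 0 \<le> t j s" "\<And>j s. t j s \<le> 1"
  shows "comb p (\<lambda>i. comb (r i) t) = comb (\<lambda>j. \<Sum>i. p i * r i j) t"
proof
  fix s
  have "comb p (\<lambda>i. comb (r i) t) s = (\<Sum>j. \<Sum>i. p i * (r i j * t j s))"
    unfolding comb_def using weights_nonneg[OF r] t
    by (intro suminf_weighted_swap[OF p, of _ 1] summable_weighted[OF r, of _ 1]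
        comb_le[OF r, of t s 1, unfolded comb_def]) auto
  also have "\<dots> = comb (\<lambda>j. \<Sum>i. p i * r i j) t s"
    unfolding comb_def mult.assoc[symmetric] using weights_nonneg[OF r] weights_le_1[OF r]
    by (intro suminf_cong suminf_mult2[symmetric] summable_weighted[OF p, of _ 1])
  finally show "comb p (\<lambda>i. comb (r i) t) s = comb (\<lambda>j. \<Sum>i. p i * r i j) t s" .
qed

lemma sums_comb_comb:
  assumes p: "weights p" and Q: "\<And>i. weights (Q i)" and h: "\<And>i j. 0 \<le> h i j" "\<And>i j. h i j \<le> 1"
  shows "(\<lambda>n. case_prod (\<lambda>i j. p i * Q i j * h i j) (prod_decode n))
    sums (\<Sum>i. p i * (\<Sum>j. Q i j * h i j))"
proof -
  have row: "(\<lambda>j. p i * Q i j * h i j) sums (p i * (\<Sum>j. Q i j * h i j))" for i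
    unfolding mult.assoc using Q h by (intro sums_mult summable_sums summable_weighted[of _ _ 1])
  then have row_sum: "(\<lambda>i. \<Sum>j. p i * Q i j * h i j) = (\<lambda>i. p i * (\<Sum>j. Q i j * h i j))"
    by (simp add: sums_iff)
  have "(\<lambda>n. case_prod (\<lambda>i j. p i * Q i j * h i j) (prod_decode n))
      sums (\<Sum>i. \<Sum>j. p i * Q i j * h i j)"
  proof (rule sums_prod_decode_nonneg)
    show "summable (\<lambda>i. \<Sum>j. p i * Q i j * h i j)"
      unfolding row_sum using Q h
      by (intro summable_weighted[OF p, of _ 1]
          comb_nonneg[OF Q, of "\<lambda>j _. h _ j" _ 1, unfolded comb_def]
          comb_le[OF Q, of "\<lambda>j _. h _ j", unfolded comb_def]) auto
    show "summable (\<lambda>j. p i * Q i j * h i j)" for i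
      using row by (rule sums_summable)
  qed (use p Q h weights_nonneg in simp)
  then show ?thesis
    by (simp only: row_sum)
qed

lemma weights_comb_comb:
  assumes p: "weights p" and Q: "\<And>i. weights (Q i)"
  shows "weights (\<lambda>n. case_prod (\<lambda>i j. p i * Q i j) (prod_decode n))"
proof -
  have "(\<lambda>n. case_prod (\<lambda>i j. p i * Q i j) (prod_decode n)) sums (\<Sum>i. p i * suminf (Q i))"
    using sums_comb_comb[of p Q, OF p Q, of "\<lambda>_ _. 1"] by simp
  moreover have "(\<Sum>i. p i * suminf (Q i)) \<le> suminf p"
  proof (rule suminf_le)
    show "p i * suminf (Q i) \<le> p i" for i
      using weights_nonneg[OF p] weights_suminf_le_1[OF Q] by (simp add: mult_left_le)
    show "summable (\<lambda>i. p i * suminf (Q i))"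
      using weights_suminf_le_1[OF Q] suminf_nonneg[OF weights_summable[OF Q] weights_nonneg[OF Q]]
      by (intro summable_weighted[OF p, of _ 1])
  qed (rule weights_summable[OF p])
  moreover have "0 \<le> case_prod (\<lambda>i j. p i * Q i j) (prod_decode n)" for n
    using weights_nonneg[OF p] weights_nonneg[OF Q] by (simp split: prod.split)
  ultimately show ?thesis
    using weights_suminf_le_1[OF p] by (auto simp: weights_def sums_iff)
qed

lemma comb_comb:
  assumes p: "weights p" and Q: "\<And>i. weights (Q i)"
    and g: "\<And>i j s. 0 \<le> g i j s" "\<And>i j s. g i j s \<le> 1"
  shows "comb p (\<lambda>i. comb (Q i) (g i))
    = comb (\<lambda>n. case_prod (\<lambda>i j. p i * Q i j) (prod_decode n)) (\<lambda>n. case_prod g (prod_decode n))"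
  using sums_comb_comb[of p Q, OF p Q, of "\<lambda>i j. g i j _"] g
  by (intro ext) (simp add: comb_def sums_iff case_prod_beta)

lemma comb_comb_dirac:
  assumes p: "weights p" and Q: "\<And>i. weights (Q i)"
  shows "comb p (\<lambda>i. comb (Q i) (\<lambda>j. dirac (E i j)))
    = comb (\<lambda>n. case_prod (\<lambda>i j. p i * Q i j) (prod_decode n))
        (\<lambda>n. dirac (case_prod E (prod_decode n)))"
  using comb_comb[of p Q "\<lambda>i j. dirac (E i j)", OF p Q] by (simp add: dirac_def case_prod_beta)

section \<open>Subprobability mass functions\<close>

definition subprob :: "('b \<Rightarrow> real) \<Rightarrow> bool" where
  "subprob \<mu> \<longleftrightarrow> (\<forall>s. 0 \<le> \<mu> s) \<and> (\<forall>F. finite F \<longrightarrow> sum \<mu> F \<le> 1)"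

lemma subprob_nonneg: "subprob \<mu> \<Longrightarrow> 0 \<le> \<mu> s"
  and subprob_sum_le_1: "subprob \<mu> \<Longrightarrow> finite F \<Longrightarrow> sum \<mu> F \<le> 1"
  by (auto simp: subprob_def)

lemma subprob_le_1: "subprob \<mu> \<Longrightarrow> \<mu> s \<le> 1"
  using subprob_sum_le_1[of \<mu> "{s}"] by simp

lemma subprob_summable: "subprob \<mu> \<Longrightarrow> \<mu> summable_on UNIV"
  by (rule nonneg_bdd_above_summable_on) (auto simp: subprob_def bdd_above_def)

lemma subprob_infsum_le_1: "subprob \<mu> \<Longrightarrow> infsum \<mu> UNIV \<le> 1"
  by (rule infsum_le_finite_sums[OF subprob_summable]) (auto simp: subprob_def)

lemma subprob_le_infsum: "subprob \<mu> \<Longrightarrow> \<mu> s \<le> infsum \<mu> UNIV"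
  using finite_sum_le_infsum[of \<mu> UNIV "{s}"] by (simp add: subprob_summable subprob_nonneg)

lemma subprob_zero: "subprob (\<lambda>_. 0)"
  by (simp add: subprob_def)

lemma subprob_dirac: "subprob (dirac E)"
  by (auto simp: subprob_def dirac_def sum.If_cases)

lemma subdist_iff_subprob: "subdist \<mu> \<longleftrightarrow> subprob \<mu> \<and> (\<forall>s. \<not> closed s \<longrightarrow> \<mu> s = 0)"
proof
  assume \<mu>: "subdist \<mu>"
  have "sum \<mu> F \<le> 1" if "finite F" for F
    using finite_sum_le_infsum[of \<mu> UNIV F] \<mu> that by (auto simp: subdist_def)
  then show "subprob \<mu> \<and> (\<forall>s. \<not> closed s \<longrightarrow> \<mu> s = 0)"
    using \<mu> by (auto simp: subdist_def subprob_def)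
qed (auto simp: subdist_def subprob_def intro: subprob_summable subprob_infsum_le_1)

lemma subdist_zero: "subdist (\<lambda>_. 0)"
  by (simp add: subdist_def)

lemma sum_comb_le_suminf:
  assumes p: "weights p" and f: "\<And>i. subprob (f i)" and "finite F"
  shows "sum (comb p f) F \<le> suminf p"
proof -
  have row: "summable (\<lambda>i. p i * f i s)" for s
    using summable_weighted[OF p, of "\<lambda>i. f i s" 1] subprob_nonneg[OF f] subprob_le_1[OF f] by blast
  have "sum (comb p f) F = (\<Sum>i. \<Sum>s\<in>F. p i * f i s)"
    unfolding comb_def using row by (rule suminf_sum[symmetric])
  also have "\<dots> \<le> suminf p"
  proof (rule suminf_le)
    show "(\<Sum>s\<in>F. p i * f i s) \<le> p i" for i
      using subprob_sum_le_1[OF f \<open>finite F\<close>, of i] weights_nonneg[OF p, of i]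
      by (simp add: sum_distrib_left[symmetric] mult_left_le)
  qed (use row weights_summable[OF p] in \<open>auto intro: summable_sum\<close>)
  finally show ?thesis .
qed

lemma subprob_comb:
  assumes p: "weights p" and f: "\<And>i. subprob (f i)"
  shows "subprob (comb p f)"
  unfolding subprob_def
proof (intro allI impI conjI)
  show "0 \<le> comb p f s" for s
    using subprob_nonneg[OF f] subprob_le_1[OF f] by (rule comb_nonneg[OF p])
  show "sum (comb p f) F \<le> 1" if "finite F" for F
    using sum_comb_le_suminf[of p f, OF p f that] weights_suminf_le_1[OF p] by linarith
qed

lemma subdist_comb:
  assumes p: "weights p" and f: "\<And>i. subdist (f i)"
  shows "subdist (comb p f)"
  using subprob_comb[OF p] f by (auto simp: subdist_iff_subprob comb_def)

lemma comb_eq_0_component: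
  assumes p: "weights p" and f: "\<And>i. subprob (f i)" and "comb p f s = 0" "p i \<noteq> 0"
  shows "f i s = 0"
proof -
  have "p i * f i s \<le> 0"
    using comb_ge_component[OF p, of f s i] subprob_nonneg[OF f] subprob_le_1[OF f] assms(3) by simp
  then show ?thesis
    using weights_nonneg[OF p, of i] subprob_nonneg[OF f, of i s] \<open>p i \<noteq> 0\<close>
    by (simp add: mult_le_0_iff)
qed

lemma pstep_subprob: "pstep P \<mu> \<Longrightarrow> subprob \<mu>"
proof (induction rule: pstep.induct)
  case (1 E)
  then show ?case by (rule subprob_dirac)
next
  case (2 P \<mu> Q \<nu> p)
  have p: "0 < Rep_prob p" "Rep_prob p < 1"
    using Rep_prob[of p] by auto
  have "Rep_prob p * sum \<mu> F + (1 - Rep_prob p) * sum \<nu> F \<le> Rep_prob p * 1 + (1 - Rep_prob p) * 1"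
    if "finite F" for F
    using 2 p that by (intro add_mono mult_left_mono) (auto intro: subprob_sum_le_1)
  then show ?case
    using 2 p
    by (auto simp: subprob_def sum.distrib sum_distrib_left[symmetric] intro!: add_nonneg_nonneg)
qed

lemma ntrans_subprob: "ntrans E a \<mu> \<Longrightarrow> subprob \<mu>"
  by (induction rule: ntrans.induct) (auto intro: pstep_subprob)

lemma lift_subprob: "lift R \<mu> \<nu> \<Longrightarrow> subprob \<mu> \<and> subprob \<nu>"
  by (induction rule: lift.induct) (auto intro: subprob_dirac subprob_comb)

section \<open>Splitting combinations of Dirac distributions\<close>

lemma sum_weights_fibre_le_comb_dirac:
  assumes q: "weights q" and "finite J"
  shows "sum q {j\<in>J. e j = s} \<le> comb q (\<lambda>j. dirac (e j)) s"
proof -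
  have "sum q {j\<in>J. e j = s} = (\<Sum>j\<in>J. if e j = s then q j else 0)"
    by (rule sum.inter_filter[OF \<open>finite J\<close>])
  also have "\<dots> = (\<Sum>j\<in>J. q j * dirac (e j) s)"
    by (rule sum.cong) (auto simp: dirac_def)
  also have "\<dots> \<le> comb q (\<lambda>j. dirac (e j)) s"
    unfolding comb_def using q weights_nonneg[OF q] \<open>finite J\<close>
    by (intro sum_le_suminf summable_weighted[OF q, of _ 1]) (auto simp: dirac_def)
  finally show ?thesis .
qed

lemma suminf_le_infsum_grouped:
  fixes r :: "nat \<Rightarrow> real" and \<nu> :: "'b \<Rightarrow> real"
  assumes r: "\<And>j. 0 \<le> r j" and grouped: "\<And>n s. sum r {j\<in>{..<n}. e j = s} \<le> \<nu> s"
    and \<nu>: "\<nu> summable_on UNIV" "\<And>s. 0 \<le> \<nu> s"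
  shows "summable r" and "suminf r \<le> infsum \<nu> UNIV"
proof -
  have partial: "sum r {..<n} \<le> infsum \<nu> UNIV" for n
  proof -
    have "sum r {..<n} = (\<Sum>s\<in>e ` {..<n}. sum r {j\<in>{..<n}. e j = s})"
      by (rule sum.image_gen) auto
    also have "\<dots> \<le> sum \<nu> (e ` {..<n})"
      by (intro sum_mono grouped)
    also have "\<dots> \<le> infsum \<nu> UNIV"
      using \<nu> by (intro finite_sum_le_infsum) auto
    finally show ?thesis .
  qed
  then show "summable r"
    using r by (intro summableI_nonneg_bounded)
  then show "suminf r \<le> infsum \<nu> UNIV"
    using partial by (rule suminf_le_const)
qed

lemma comb_dirac_split:
  assumes q: "weights q" and \<nu>: "subprob \<nu>"
    and support: "\<And>s. comb q (\<lambda>j. dirac (e j)) s = 0 \<Longrightarrow> \<nu> s = 0"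
  defines "r \<equiv> \<lambda>j. q j * \<nu> (e j) / comb q (\<lambda>j. dirac (e j)) (e j)"
    \<comment> \<open>division by 0 only where q j = 0 and \<nu> (e j) = 0 anyway\<close>
  shows "weights r" and "\<nu> = comb r (\<lambda>j. dirac (e j))"
proof -
  define M where "M = comb q (\<lambda>j. dirac (e j))"
  have M_nonneg: "0 \<le> M s" for s
    unfolding M_def by (rule comb_nonneg[OF q, of _ _ 1]) (auto simp: dirac_def)
  have r_nonneg: "0 \<le> r j" for j
    unfolding r_def M_def[symmetric] using weights_nonneg[OF q] subprob_nonneg[OF \<nu>] M_nonneg
    by simp
  have grouped: "sum r {j\<in>{..<n}. e j = s} \<le> \<nu> s" for n s
  proof -
    have "sum r {j\<in>{..<n}. e j = s} = \<nu> s / M s * sum q {j\<in>{..<n}. e j = s}"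
      unfolding r_def M_def[symmetric] sum_distrib_left by (rule sum.cong) auto
    also have "\<dots> \<le> \<nu> s / M s * M s"
      unfolding M_def using subprob_nonneg[OF \<nu>] M_nonneg
      by (intro mult_left_mono sum_weights_fibre_le_comb_dirac[OF q]) (auto simp: M_def)
    also have "\<dots> \<le> \<nu> s"
      using subprob_nonneg[OF \<nu>] by (cases "M s = 0") auto
    finally show ?thesis .
  qed
  have "summable r" and "suminf r \<le> infsum \<nu> UNIV"
    using suminf_le_infsum_grouped[of r e \<nu>,
        OF r_nonneg grouped subprob_summable[OF \<nu>] subprob_nonneg[OF \<nu>]]
    by auto
  then show "weights r"
    using r_nonneg subprob_infsum_le_1[OF \<nu>] by (auto simp: weights_def)
  show "\<nu> = comb r (\<lambda>j. dirac (e j))"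
  proof
    fix s
    have eq: "(\<lambda>j. r j * dirac (e j) s) = (\<lambda>j. \<nu> s / M s * (q j * dirac (e j) s))"
      by (auto simp: r_def M_def dirac_def fun_eq_iff)
    have "(\<lambda>j. q j * dirac (e j) s) sums M s"
      unfolding M_def comb_def
      by (intro summable_sums summable_weighted[OF q, of _ 1]) (auto simp: dirac_def)
    then have "(\<lambda>j. r j * dirac (e j) s) sums (\<nu> s / M s * M s)"
      unfolding eq by (rule sums_mult)
    then have "comb r (\<lambda>j. dirac (e j)) s = \<nu> s / M s * M s"
      by (simp add: comb_def sums_iff)
    then show "\<nu> s = comb r (\<lambda>j. dirac (e j)) s"
      using support[of s] by (cases "M s = 0") (auto simp: M_def)
  qed
qed

lemma suminf_split_weights:
  assumes p: "weights p" and \<nu>: "\<And>i. subprob (\<nu> i)" and q: "weights q"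
    and M: "comb p \<nu> = comb q (\<lambda>j. dirac (e j))"
  shows "(\<Sum>i. p i * (q j * \<nu> i (e j) / comb p \<nu> (e j))) = q j"
proof -
  let ?M = "comb p \<nu> (e j)"
  have "(\<lambda>i. p i * \<nu> i (e j)) sums ?M"
    unfolding comb_def using subprob_nonneg[OF \<nu>] subprob_le_1[OF \<nu>]
    by (intro summable_sums summable_weighted[OF p, of _ 1])
  then have "(\<lambda>i. q j / ?M * (p i * \<nu> i (e j))) sums (q j / ?M * ?M)"
    by (rule sums_mult)
  moreover have "(\<lambda>i. q j / ?M * (p i * \<nu> i (e j))) = (\<lambda>i. p i * (q j * \<nu> i (e j) / ?M))"
    by (simp add: fun_eq_iff)
  moreover have "q j = 0" if "?M = 0"
    using comb_ge_component[OF q, of "\<lambda>j. dirac (e j)" "e j" j] weights_nonneg[OF q, of j] that M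
    by (simp add: dirac_def)
  ultimately show ?thesis
    by (cases "?M = 0") (simp_all add: sums_iff)
qed

section \<open>Combined transitions\<close>

lemma ctrans_normal_form:
  assumes "ctrans \<mu> a \<mu>'"
  shows "\<exists>q e t. weights q \<and> (\<forall>j. closed (e j) \<and> ntrans (e j) a (t j))
     \<and> \<mu> = comb q (\<lambda>j. dirac (e j)) \<and> \<mu>' = comb q t"
  using assms
proof (induction rule: ctrans.induct)
  case (base E a \<mu>)
  show ?case
    by (rule exI[of _ "\<lambda>j. of_bool (j = 0)"], rule exI[of _ "\<lambda>_. E"], rule exI[of _ "\<lambda>_. \<mu>"])
      (use base weights_unit in \<open>simp add: comb_unit\<close>)
next
  case (comb p \<nu> a \<mu>)
  have "\<forall>i. \<exists>q e t. weights q \<and> (\<forall>j. closed (e j) \<and> ntrans (e j) a (t j))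
      \<and> \<nu> i = comb q (\<lambda>j. dirac (e j)) \<and> \<mu> i = comb q t"
    using comb.IH by blast
  then obtain Q E T where QET: "\<forall>i. weights (Q i) \<and> (\<forall>j. closed (E i j) \<and> ntrans (E i j) a (T i j))
      \<and> \<nu> i = comb (Q i) (\<lambda>j. dirac (E i j)) \<and> \<mu> i = comb (Q i) (T i)"
    unfolding choice_iff by blast
  then have Q: "weights (Q i)" and T: "subprob (T i j)" for i j
    using ntrans_subprob by blast+
  have "\<nu> = (\<lambda>i. comb (Q i) (\<lambda>j. dirac (E i j)))" and "\<mu> = (\<lambda>i. comb (Q i) (T i))"
    using QET by auto
  then show ?case
    using weights_comb_comb[of p Q, OF comb.hyps(1) Q] comb_comb_dirac[of p Q E, OF comb.hyps(1) Q]
      comb_comb[of p Q T, OF comb.hyps(1) Q subprob_nonneg[OF T] subprob_le_1[OF T]] QET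
    by (intro exI[of _ "\<lambda>n. case_prod (\<lambda>i j. p i * Q i j) (prod_decode n)"]
        exI[of _ "\<lambda>n. case_prod E (prod_decode n)"] exI[of _ "\<lambda>n. case_prod T (prod_decode n)"])
      (auto split: prod.split)
qed

lemma ctrans_dirac_normal_form:
  assumes "ctrans (dirac E) a \<mu>'"
  shows "\<exists>q t. weights q \<and> suminf q = 1 \<and> (\<forall>j. q j \<noteq> 0 \<longrightarrow> ntrans E a (t j)) \<and> \<mu>' = comb q t"
proof -
  obtain q e t where q: "weights q" and et: "\<And>j. closed (e j) \<and> ntrans (e j) a (t j)"
    and E: "dirac E = comb q (\<lambda>j. dirac (e j))" and \<mu>': "\<mu>' = comb q t"
    using ctrans_normal_form[OF assms] by blast
  have e: "e j = E" if "q j \<noteq> 0" for j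
  proof -
    have "q j * dirac (e j) (e j) \<le> dirac E (e j)"
      unfolding E by (rule comb_ge_component[OF q]) (auto simp: dirac_def)
    then show ?thesis
      using that weights_nonneg[OF q, of j] by (auto simp: dirac_def split: if_splits)
  qed
  have "(\<lambda>j. q j * dirac (e j) E) = q"
    using e by (auto simp: dirac_def fun_eq_iff)
  then have "suminf q = dirac E E"
    unfolding E comb_def by simp
  then show ?thesis
    using q et e \<mu>' by (intro exI[of _ q] exI[of _ t]) (auto simp: dirac_def)
qed

lemma ctrans_subprob:
  assumes "ctrans \<mu> a \<mu>'"
  shows "subprob \<mu>'"
proof -
  obtain q e t where q: "weights q" and et: "\<And>j. closed (e j) \<and> ntrans (e j) a (t j)"
    and "\<mu> = comb q (\<lambda>j. dirac (e j))" and "\<mu>' = comb q t"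
    using ctrans_normal_form[OF assms] by blast
  then show ?thesis
    using subprob_comb[of q t, OF q] et ntrans_subprob by blast
qed

lemma ctrans_infsum_le:
  assumes tr: "ctrans \<mu> a \<mu>'" and \<mu>: "subprob \<mu>"
  shows "infsum \<mu>' UNIV \<le> infsum \<mu> UNIV"
proof -
  obtain q e t where q: "weights q" and et: "\<And>j. closed (e j) \<and> ntrans (e j) a (t j)"
    and \<mu>_eq: "\<mu> = comb q (\<lambda>j. dirac (e j))" and \<mu>': "\<mu>' = comb q t"
    using ctrans_normal_form[OF tr] by blast
  have t: "subprob (t j)" for j
    using et ntrans_subprob by blast
  have "infsum \<mu>' UNIV \<le> suminf q"
    using sum_comb_le_suminf[of q t, OF q t] subprob_summable[OF ctrans_subprob[OF tr]]
    unfolding \<mu>' by (intro infsum_le_finite_sums) auto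
  also have "suminf q \<le> infsum \<mu> UNIV"
  proof (rule suminf_le_infsum_grouped(2))
    show "sum q {j\<in>{..<n}. e j = s} \<le> \<mu> s" for n s
      unfolding \<mu>_eq by (rule sum_weights_fibre_le_comb_dirac[OF q]) simp
  qed (use weights_nonneg[OF q] subprob_summable[OF \<mu>] subprob_nonneg[OF \<mu>] in auto)
  finally show ?thesis .
qed

lemma ctrans_comb_decompose:
  assumes p: "weights p" and \<mu>: "\<And>i. subprob (\<mu> i)" and tr: "ctrans (comb p \<mu>) a \<mu>'"
  shows "\<exists>\<mu>''. (\<forall>i. p i \<noteq> 0 \<longrightarrow> ctrans (\<mu> i) a (\<mu>'' i)) \<and> \<mu>' = comb p \<mu>''"
proof -
  obtain q e t where q: "weights q" and et: "\<And>j. closed (e j) \<and> ntrans (e j) a (t j)"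
    and M: "comb p \<mu> = comb q (\<lambda>j. dirac (e j))" and \<mu>': "\<mu>' = comb q t"
    using ctrans_normal_form[OF tr] by blast
  \<comment> \<open>zero-weight components need not satisfy the support condition of comb_dirac_split\<close>
  define \<mu>\<^sub>0 where "\<mu>\<^sub>0 i = (if p i = 0 then (\<lambda>_. 0) else \<mu> i)" for i
  have \<mu>\<^sub>0: "subprob (\<mu>\<^sub>0 i)" for i
    by (simp add: \<mu>\<^sub>0_def \<mu> subprob_zero)
  have M\<^sub>0: "comb p \<mu>\<^sub>0 = comb q (\<lambda>j. dirac (e j))"
    unfolding M[symmetric] by (rule comb_cong) (simp add: \<mu>\<^sub>0_def)
  define r where "r i j = q j * \<mu>\<^sub>0 i (e j) / comb p \<mu>\<^sub>0 (e j)" for i j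
  have "comb q (\<lambda>j. dirac (e j)) s = 0 \<Longrightarrow> \<mu>\<^sub>0 i s = 0" for i s
    using comb_eq_0_component[where f = \<mu>\<^sub>0 and s = s and i = i, OF p \<mu>\<^sub>0] M\<^sub>0
    by (cases "p i = 0") (simp_all add: \<mu>\<^sub>0_def)
  then have r: "weights (r i)" and \<mu>\<^sub>0_split: "\<mu>\<^sub>0 i = comb (r i) (\<lambda>j. dirac (e j))" for i
    using comb_dirac_split[where \<nu> = "\<mu>\<^sub>0 i" and e = e, OF q \<mu>\<^sub>0] unfolding r_def M\<^sub>0 by auto
  have "ctrans (\<mu> i) a (comb (r i) t)" if "p i \<noteq> 0" for i
  proof -
    have "ctrans (comb (r i) (\<lambda>j. dirac (e j))) a (comb (r i) t)"
      using et by (intro ctrans.comb[OF r] allI ctrans.base) simp_all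
    then show ?thesis
      using \<mu>\<^sub>0_split[of i] that by (simp add: \<mu>\<^sub>0_def)
  qed
  moreover have "comb p (\<lambda>i. comb (r i) t) = \<mu>'"
  proof -
    have t: "subprob (t j)" for j
      using et ntrans_subprob by blast
    show ?thesis
      unfolding \<mu>' r_def
        comb_comb_swap[of p r t, OF p r subprob_nonneg[OF t] subprob_le_1[OF t], unfolded r_def]
        suminf_split_weights[OF p \<mu>\<^sub>0 q M\<^sub>0] ..
  qed
  ultimately show ?thesis
    by (intro exI[of _ "\<lambda>i. comb (r i) t"]) simp
qed

lemma ctrans_zero: "ctrans (\<lambda>_. 0) a (\<lambda>_. 0)"
proof -
  have "ctrans (dirac (Pref a (Dirac Nil))) a (dirac Nil)"
    by (intro ctrans.base ntrans.intros pstep.intros) (simp add: closed_def)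
  then have "ctrans (comb (\<lambda>_. 0) (\<lambda>_. dirac (Pref a (Dirac Nil)))) a
      (comb (\<lambda>_. 0) (\<lambda>_. dirac Nil))"
    by (intro ctrans.comb weights_zero) simp
  then show ?thesis
    by (simp add: comb_zero)
qed

section \<open>Weak transitions\<close>

lemma weak_zero: "weak (\<lambda>_. 0) (\<lambda>_. 0)"
  unfolding weak_def derivation_def
  by (rule exI[of _ "\<lambda>_ _. 0"], rule exI[of _ "\<lambda>_ _. 0"]) (simp add: subdist_zero ctrans_zero)

lemma wtrans_zero: "wtrans (\<lambda>_. 0) a (\<lambda>_. 0)"
  unfolding wtrans_def using weak_zero ctrans_zero by blast

lemma derivation_summable:
  assumes d: "derivation mto mx"
  shows "summable (\<lambda>i. mx i s)" and "(\<Sum>i. mx i s) \<le> 2"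
proof -
  have sd: "subprob (mto i)" "subprob (mx i)" for i
    using d by (auto simp: derivation_def subdist_iff_subprob)
  have step: "infsum (mto (Suc n)) UNIV + infsum (mx (Suc n)) UNIV \<le> infsum (mto n) UNIV" for n
  proof -
    have "ctrans (mto n) Tau (\<lambda>s. mto (Suc n) s + mx (Suc n) s)"
      using d by (simp add: derivation_def)
    then have "infsum (\<lambda>s. mto (Suc n) s + mx (Suc n) s) UNIV \<le> infsum (mto n) UNIV"
      using sd by (intro ctrans_infsum_le)
    then show ?thesis
      using infsum_add[OF subprob_summable[OF sd(1)] subprob_summable[OF sd(2)]] by simp
  qed
  have mass: "(\<Sum>i<Suc n. infsum (mx i) UNIV) + infsum (mto n) UNIV
      \<le> infsum (mto 0) UNIV + infsum (mx 0) UNIV"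
    for n
  proof (induction n)
    case (Suc n)
    then show ?case
      using step[of n] by simp
  qed simp
  have partial: "(\<Sum>i<n. mx i s) \<le> 2" for n
  proof -
    have "(\<Sum>i<n. mx i s) \<le> (\<Sum>i<Suc n. infsum (mx i) UNIV)"
      using sum_mono[of "{..<n}" "\<lambda>i. mx i s" "\<lambda>i. infsum (mx i) UNIV"] subprob_le_infsum[OF sd(2)]
        infsum_nonneg[where f = "mx n" and M = UNIV] subprob_nonneg[OF sd(2)] by fastforce
    also have "\<dots> \<le> infsum (mto 0) UNIV + infsum (mx 0) UNIV"
      using mass[of n] infsum_nonneg[where f = "mto n" and M = UNIV] subprob_nonneg[OF sd(1)]
      by fastforce
    also have "\<dots> \<le> 2"
      using subprob_infsum_le_1[OF sd(1), of 0] subprob_infsum_le_1[OF sd(2), of 0] by simp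
    finally show ?thesis .
  qed
  show "summable (\<lambda>i. mx i s)"
    using partial subprob_nonneg[OF sd(2)] by (intro summableI_nonneg_bounded)
  then show "(\<Sum>i. mx i s) \<le> 2"
    using partial by (rule suminf_le_const)
qed

lemma weak_comb:
  assumes p: "weights p" and weak: "\<And>i. weak (\<mu> i) (\<nu> i)"
  shows "weak (comb p \<mu>) (comb p \<nu>)"
proof -
  have "\<forall>i. \<exists>to x. derivation to x \<and> \<mu> i = (\<lambda>s. to 0 s + x 0 s) \<and> \<nu> i = (\<lambda>s. \<Sum>k. x k s)"
    using weak by (simp add: weak_def)
  then obtain TO TX where D: "\<And>i. derivation (TO i) (TX i)"
    and \<mu>: "\<And>i. \<mu> i = (\<lambda>s. TO i 0 s + TX i 0 s)" and \<nu>: "\<And>i. \<nu> i = (\<lambda>s. \<Sum>k. TX i k s)"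
    unfolding choice_iff by blast
  have TO: "subdist (TO i k)" and TX: "subdist (TX i k)" for i k
    using D by (auto simp: derivation_def)
  have bounds: "0 \<le> TO i k s" "TO i k s \<le> 1" "0 \<le> TX i k s" "TX i k s \<le> 1" for i k s
    using TO TX by (auto simp: subdist_iff_subprob intro: subprob_nonneg subprob_le_1)
  define mto where "mto k = comb p (\<lambda>i. TO i k)" for k
  define mx where "mx k = comb p (\<lambda>i. TX i k)" for k
  have add: "comb p (\<lambda>i s. TO i k s + TX i k s) = (\<lambda>s. mto k s + mx k s)" for k
    unfolding mto_def mx_def by (rule comb_add[OF p]) (rule bounds)+
  have "derivation mto mx"
    unfolding derivation_def
  proof (intro conjI allI)
    show "subdist (mto k)" "subdist (mx k)" for k
      unfolding mto_def mx_def
      by (rule subdist_comb[OF p], rule TO, rule subdist_comb[OF p], rule TX)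
    show "ctrans (mto k) Tau (\<lambda>s. mto (Suc k) s + mx (Suc k) s)" for k
    proof -
      have "ctrans (comb p (\<lambda>i. TO i k)) Tau (comb p (\<lambda>i s. TO i (Suc k) s + TX i (Suc k) s))"
        by (intro ctrans.comb[OF p] allI) (use D in \<open>simp add: derivation_def\<close>)
      then show ?thesis
        by (simp only: add mto_def)
    qed
  qed
  moreover have "comb p \<mu> = (\<lambda>s. mto 0 s + mx 0 s)"
    unfolding add[symmetric] by (rule arg_cong[where f = "comb p"], rule ext, rule \<mu>)
  moreover have "comb p \<nu> = (\<lambda>s. \<Sum>k. mx k s)"
  proof
    fix s
    show "comb p \<nu> s = (\<Sum>k. mx k s)"
      unfolding mx_def comb_def \<nu>
      by (rule suminf_weighted_swap[OF p]) (use bounds derivation_summable[OF D] in auto)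
  qed
  ultimately show ?thesis
    unfolding weak_def by blast
qed

lemma wtrans_comb:
  assumes p: "weights p" and wtrans: "\<And>i. wtrans (\<mu> i) a (\<nu> i)"
  shows "wtrans (comb p \<mu>) a (comb p \<nu>)"
proof -
  have "\<forall>i. \<exists>\<mu>\<^sub>1 \<mu>\<^sub>2. weak (\<mu> i) \<mu>\<^sub>1 \<and> ctrans \<mu>\<^sub>1 a \<mu>\<^sub>2 \<and> weak \<mu>\<^sub>2 (\<nu> i)"
    using wtrans by (simp add: wtrans_def)
  then obtain M\<^sub>1 M\<^sub>2
    where "\<And>i. weak (\<mu> i) (M\<^sub>1 i)" "\<And>i. ctrans (M\<^sub>1 i) a (M\<^sub>2 i)" "\<And>i. weak (M\<^sub>2 i) (\<nu> i)"
    unfolding choice_iff by blast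
  then have "weak (comb p \<mu>) (comb p M\<^sub>1)" "ctrans (comb p M\<^sub>1) a (comb p M\<^sub>2)"
    "weak (comb p M\<^sub>2) (comb p \<nu>)"
    by (auto intro: weak_comb[OF p] ctrans.comb[OF p])
  then show ?thesis
    unfolding wtrans_def by blast
qed

section \<open>Lifting simulations to subdistributions\<close>

lemma lift_zero: "R E F \<Longrightarrow> lift R (\<lambda>_. 0) (\<lambda>_. 0)"
  using lift.comb[OF weights_zero, of R "\<lambda>_. dirac E" "\<lambda>_. dirac F"] lift.base[of R E F]
  by (simp add: comb_zero)

lemma wbisim_Nil: "wbisim Nil Nil"
proof -
  have "weak_bisimulation (\<lambda>E F. E = Nil \<and> F = Nil)"
    unfolding weak_bisimulation_def by (auto simp: closed_def elim: ntrans.cases)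
  then show ?thesis
    unfolding wbisim_def by blast
qed

lemma wtrans_lift_comb:
  assumes p: "weights p" and S: "S E F"
    and step: "\<And>i. p i \<noteq> 0 \<Longrightarrow> \<exists>\<nu>'. wtrans (\<nu> i) a \<nu>' \<and> lift S \<nu>' (\<mu>' i)"
  shows "\<exists>\<nu>'. wtrans (comb p \<nu>) a \<nu>' \<and> lift S \<nu>' (comb p \<mu>')"
proof -
  obtain N where N: "\<And>i. p i \<noteq> 0 \<Longrightarrow> wtrans (\<nu> i) a (N i) \<and> lift S (N i) (\<mu>' i)"
    using step by metis
  define restrict where "restrict f i = (if p i = 0 then (\<lambda>_. 0) else f i)"
    for f :: "nat \<Rightarrow> 'a dist" and i
  have restrict: "comb p (restrict f) = comb p f" for f
    by (rule comb_cong) (simp add: restrict_def)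
  have "wtrans (comb p (restrict \<nu>)) a (comb p (restrict N))"
    by (rule wtrans_comb[OF p]) (use N in \<open>simp add: restrict_def wtrans_zero\<close>)
  moreover have "lift S (comb p (restrict N)) (comb p (restrict \<mu>'))"
    by (rule lift.comb[OF p]) (use N in \<open>simp add: restrict_def lift_zero[where R = S, OF S]\<close>)
  ultimately show ?thesis
    unfolding restrict by blast
qed

lemma lift_ctrans_wtrans:
  assumes simulation:
      "\<And>F E a \<mu>'. R F E \<Longrightarrow> ntrans E a \<mu>' \<Longrightarrow> \<exists>\<nu>'. wtrans (dirac F) a \<nu>' \<and> lift S \<nu>' \<mu>'"
    and S: "S E\<^sub>0 F\<^sub>0" \<comment> \<open>provides lift S 0 0 for components of weight 0\<close>
    and "lift R \<nu> \<mu>" and "ctrans \<mu> a \<mu>'"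
  shows "\<exists>\<nu>'. wtrans \<nu> a \<nu>' \<and> lift S \<nu>' \<mu>'"
  using assms(3,4)
proof (induction arbitrary: \<mu>' rule: lift.induct)
  case (base F E)
  obtain q t where q: "weights q" "suminf q = 1" and t: "\<And>j. q j \<noteq> 0 \<Longrightarrow> ntrans E a (t j)"
    and \<mu>': "\<mu>' = comb q t"
    using ctrans_dirac_normal_form[OF base.prems] by blast
  have "dirac F = comb q (\<lambda>_. dirac F)"
    by (simp add: comb_const[OF q(1)] q(2))
  then show ?case
    using wtrans_lift_comb[where S = S and \<nu> = "\<lambda>_. dirac F" and \<mu>' = t, OF q(1) S]
      simulation[OF base.hyps t] \<mu>'
    by simp
next
  case (comb p \<nu> \<mu>)
  have \<mu>: "subprob (\<mu> i)" for i
    using comb.IH lift_subprob by blast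
  obtain \<mu>'' where "\<And>i. p i \<noteq> 0 \<Longrightarrow> ctrans (\<mu> i) a (\<mu>'' i)" and "\<mu>' = comb p \<mu>''"
    using ctrans_comb_decompose[where \<mu> = \<mu>, OF comb.hyps \<mu> comb.prems] by blast
  then show ?case
    using wtrans_lift_comb[where S = S and \<nu> = \<nu> and \<mu>' = \<mu>'', OF comb.hyps(1) S] comb.IH by blast
qed

theorem mainTheorem13:
  fixes \<mu> \<mu>' \<nu> :: "'a dist" and a :: "'a act"
  assumes "lift wcong \<nu> \<mu>"
    and "ctrans \<mu> a \<mu>'"
  shows "\<exists>\<nu>'. wtrans \<nu> a \<nu>' \<and> lift wbisim \<nu>' \<mu>'"
  by (rule lift_ctrans_wtrans[where S = wbisim, OF _ wbisim_Nil assms]) (auto simp: wcong_def)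

end
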